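(* Suppose the Low-Rank MDP satisfies $\eta$-feature coverage for some $\eta>0$: for all $h\in[H-1]$, $$\sup_{\pi\in\Pi_{\mathrm{M}}}\lambda_{\min}\big(\mathbb{E}^\pi[\phi^\star_h(x_h,a_h)\phi^\star_h(x_h,a_h)^\top]\big)\ge\eta.$$ Then the MDP satisfies $(\eta/2)^{3/2}$-reachability: for all $h\in\{2,\dots,H\}$ and $x\in\mathcal{X}_h$, $\sup_{\pi\in\Pi_{\mathrm{M}}}d^\pi(x)\ge(\eta/2)^{3/2}\|\mu^\star_h(x)\|$.
   Context: Setting (Low-Rank MDP). Fix horizon $H\in\mathbb{N}$, dimension $d\in\mathbb{N}$, a finite action set $\mathcal{A}$ with $|\mathcal{A}|=A$, and a measurable state space $\mathcal{X}=\mathcal{X}_1\sqcup\cdots\sqcup\mathcal{X}_H$ (disjoint layers) carrying a $\sigma$-finite measure $\nu$. The MDP $\mathcal{M}$ has an initial distribution $\rho$ on $\mathcal{X}_1$ and, for each $h\in[H-1]$, measurable maps $\phi^\star_h:\mathcal{X}_h\times\mathcal{A}\to\mathbb{R}^d$ and $\mu^\star_{h+1}:\mathcal{X}_{h+1}\to\mathbb{R}^d$ such that for every $(x,a)\in\mathcal{X}_h\times\mathcal{A}$ the function $x'\mapsto\mu^\star_{h+1}(x')^\top\phi^\star_h(x,a)$ is a probability density w.r.t. $\nu$ on $\mathcal{X}_{h+1}$; this density is the transition kernel $T_h(\cdot\mid x,a)$. $\Pi_{\mathrm{M}}$ denotes the set of randomized Markov policies $\pi:\mathcal{X}\to\Delta(\mathcal{A})$;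 an episode under $\pi$ draws $x_1\sim\rho$, $a_h\sim\pi(x_h)$, $x_{h+1}\sim T_h(\cdot\mid x_h,a_h)$, and $\mathbb{P}^\pi,\mathbb{E}^\pi$ denote the law and expectation of the trajectory. For $h\ge2$ and $x\in\mathcal{X}_h$, $d^\pi(x)$ denotes the density w.r.t. $\nu$ of the law of $x_h$ under $\pi$ (so $d^\pi(x)=\mu^\star_h(x)^\top\mathbb{E}^\pi[\phi^\star_{h-1}(x_{h-1},a_{h-1})]$). Normalization: $\|\phi^\star_h(x,a)\|\le 1$ for all $h,x,a$. Here $\|\cdot\|$ is the Euclidean norm and $\lambda_{\min}$ the smallest eigenvalue. *)

theory Defs
  imports "HOL-Analysis.Analysis" "HOL-Probability.Probability"
begin

text \<open>Layered state space: a single measure space nu on states of type 's,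
 with a measurable layer map; layer h is X_h = {x. lay x = h}.\<close>

definition layer_set :: "('s \<Rightarrow> nat) \<Rightarrow> nat \<Rightarrow> 's set" where
  "layer_set lay h = {x. lay x = h}"

definition markov_policies :: "'s measure \<Rightarrow> ('s \<Rightarrow> 'a pmf) set" where
  "markov_policies nu = {pol. \<forall>a. (\<lambda>x. pmf (pol x) a) \<in> borel_measurable nu}"

definition feat_mean_of ::
  "'s measure \<Rightarrow> (nat \<Rightarrow> 's \<Rightarrow> 'a::finite \<Rightarrow> real^'d) \<Rightarrow> ('s \<Rightarrow> 'a pmf) \<Rightarrow> nat \<Rightarrow> real^'d" where
  "feat_mean_of M phi pol h = (\<integral>x. (\<Sum>a\<in>UNIV. pmf (pol x) a *\<^sub>R phi h x a) \<partial>M)"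

fun state_law ::
  "'s measure \<Rightarrow> 's measure \<Rightarrow> ('s \<Rightarrow> nat) \<Rightarrow> (nat \<Rightarrow> 's \<Rightarrow> real^'d)
   \<Rightarrow> (nat \<Rightarrow> 's \<Rightarrow> 'a::finite \<Rightarrow> real^'d) \<Rightarrow> ('s \<Rightarrow> 'a pmf) \<Rightarrow> nat \<Rightarrow> 's measure" where
  "state_law nu rho lay mu phi pol 0 = rho"
| "state_law nu rho lay mu phi pol (Suc 0) = rho"
| "state_law nu rho lay mu phi pol (Suc (Suc h)) =
     density nu (\<lambda>x'. ennreal (indicator (layer_set lay (Suc (Suc h))) x' *
        (mu (Suc (Suc h)) x' \<bullet> feat_mean_of (state_law nu rho lay mu phi pol (Suc h)) phi pol (Suc h))))"

definition feat_mean where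
  "feat_mean nu rho lay mu phi pol h = feat_mean_of (state_law nu rho lay mu phi pol h) phi pol h"

definition outer :: "real^'d \<Rightarrow> real^'d^'d" where
  "outer v = (\<chi> i j. v $ i * v $ j)"

definition feat_cov where
  "feat_cov nu rho lay mu phi pol h =
     (\<integral>x. (\<Sum>a\<in>UNIV. pmf (pol x) a *\<^sub>R outer (phi h x a)) \<partial>(state_law nu rho lay mu phi pol h))"

definition occ_density where
  "occ_density nu rho lay mu phi pol h x = mu h x \<bullet> feat_mean nu rho lay mu phi pol (h - 1)"

definition is_eigenvalue :: "real^'d^'d \<Rightarrow> real \<Rightarrow> bool" where
  "is_eigenvalue A c \<longleftrightarrow> (\<exists>v. v \<noteq> 0 \<and> A *v v = c *\<^sub>R v)"

definition lambda_min :: "real^'d^'d \<Rightarrow> real" where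
  "lambda_min A = Inf {c. is_eigenvalue A c}"

definition low_rank_mdp ::
  "nat \<Rightarrow> 's measure \<Rightarrow> 's measure \<Rightarrow> ('s \<Rightarrow> nat) \<Rightarrow> (nat \<Rightarrow> 's \<Rightarrow> real^'d)
   \<Rightarrow> (nat \<Rightarrow> 's \<Rightarrow> 'a::finite \<Rightarrow> real^'d) \<Rightarrow> bool" where
  "low_rank_mdp H nu rho lay mu phi \<longleftrightarrow>
     sigma_finite_measure nu \<and>
     lay \<in> measurable nu (count_space UNIV) \<and>
     (\<forall>x\<in>space nu. lay x \<in> {1..H}) \<and>
     prob_space rho \<and> sets rho = sets nu \<and>
     emeasure rho (space rho - layer_set lay 1) = 0 \<and>
     (\<forall>h\<in>{1..<H}. \<forall>a. (\<lambda>x. phi h x a) \<in> borel_measurable nu) \<and>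
     (\<forall>h\<in>{2..H}. mu h \<in> borel_measurable nu) \<and>
     (\<forall>h\<in>{1..<H}. \<forall>x\<in>space nu. \<forall>a. norm (phi h x a) \<le> 1) \<and>
     (\<forall>h\<in>{1..<H}. \<forall>x\<in>space nu \<inter> layer_set lay h. \<forall>a.
        (\<forall>x'\<in>space nu \<inter> layer_set lay (Suc h). mu (Suc h) x' \<bullet> phi h x a \<ge> 0) \<and>
        (\<integral>\<^sup>+x'. ennreal (indicator (layer_set lay (Suc h)) x' * (mu (Suc h) x' \<bullet> phi h x a)) \<partial>nu) = 1)"

end

theory Submission
  imports Defs
begin

text \<open>Fix a layer h = g + 1, a state x in it and a policy whose feature covariance
  Sigma at layer g has smallest eigenvalue above eta/2. For m = mu_h(x), every feature
  phi_g(y, a) of a state y in layer g satisfies 0 <= m . phi_g(y, a) <= |m|, because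
  m . phi_g(y, a) is a transition density. Hence
  (eta/2) |m|^2 <= m^T Sigma m = E[(m . phi_g)^2] <= |m| E[m . phi_g] = |m| d(x),
  i.e. d(x) >= (eta/2) |m|. Since lambda_min Sigma <= 1 by the normalisation of the
  features, eta/2 <= 1 and therefore eta/2 >= (eta/2)^(3/2).\<close>

lemma linear_coefficient_zero_if_quadratic_nonneg:
  fixes a c :: real
  assumes "\<And>t. 0 \<le> t * a + t\<^sup>2 * c"
  shows "a = 0"
proof (rule ccontr)
  assume "a \<noteq> 0"
  define t where "t = - a / (\<bar>c\<bar> + 1)"
  have "t \<noteq> 0" and "a = - t * (\<bar>c\<bar> + 1)"
    using \<open>a \<noteq> 0\<close> by (simp_all add: t_def field_simps add_nonneg_eq_0_iff)
  hence ta: "t * a = - t\<^sup>2 * (\<bar>c\<bar> + 1)" by (simp add: power2_eq_square)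
  have "0 \<le> t * a + t\<^sup>2 * c" by (rule assms)
  also have "\<dots> \<le> t * a + t\<^sup>2 * \<bar>c\<bar>" by (simp add: mult_left_mono)
  also have "\<dots> = - t\<^sup>2" using ta by (simp add: algebra_simps)
  finally show False using \<open>t \<noteq> 0\<close> by simp
qed

lemma inner_matrix_vector_symmetric:
  fixes A :: "real^'n^'n"
  assumes "transpose A = A"
  shows "x \<bullet> (A *v y) = y \<bullet> (A *v x)"
  by (metis assms dot_lmul_matrix inner_commute vector_transpose_matrix)

lemma psd_quadratic_form_zero_imp_zero:
  fixes B :: "real^'n^'n"
  assumes sym: "transpose B = B" and psd: "\<And>u. 0 \<le> u \<bullet> (B *v u)"
    and zero: "v \<bullet> (B *v v) = 0"
  shows "B *v v = 0"
proof -
  define w where "w = B *v v"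
  have "0 \<le> t * (2 * (w \<bullet> w)) + t\<^sup>2 * (w \<bullet> (B *v w))" for t
  proof -
    have "(v + t *\<^sub>R w) \<bullet> (B *v (v + t *\<^sub>R w)) = t * (2 * (w \<bullet> w)) + t\<^sup>2 * (w \<bullet> (B *v w))"
      using zero inner_matrix_vector_symmetric[OF sym, of v w]
      by (simp add: w_def power2_eq_square algebra_simps)
    thus ?thesis using psd by metis
  qed
  hence "2 * (w \<bullet> w) = 0" by (rule linear_coefficient_zero_if_quadratic_nonneg)
  thus ?thesis by (simp add: w_def)
qed

lemma symmetric_matrix_least_eigenvalue:
  fixes A :: "real^'n^'n"
  assumes sym: "transpose A = A"
  obtains m where "is_eigenvalue A m" and "\<And>u. m * (u \<bullet> u) \<le> u \<bullet> (A *v u)"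
proof -
  \<comment> \<open>m is the minimum of the quadratic form on the unit sphere; a minimiser is an eigenvector.\<close>
  define q where "q u = u \<bullet> (A *v u)" for u
  have "continuous_on (sphere 0 1) q"
    unfolding q_def by (intro continuous_intros linear_continuous_on matrix_vector_mul_linear)
  moreover have "axis undefined 1 \<in> sphere (0::real^'n) 1" by simp
  ultimately obtain v where v: "v \<in> sphere 0 1" and min: "\<And>u. u \<in> sphere 0 1 \<Longrightarrow> q v \<le> q u"
    using continuous_attains_inf[OF compact_sphere] by blast
  define m where "m = q v"
  have low: "m * (u \<bullet> u) \<le> q u" for u
  proof (cases "u = 0")
    case False
    have "m \<le> q (inverse (norm u) *\<^sub>R u)" unfolding m_def using False by (intro min) simp
    also have "\<dots> = q u / (norm u)\<^sup>2"
      by (simp add: q_def matrix_vector_mult_scaleR power2_eq_square divide_inverse)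
    finally show ?thesis using False by (simp add: field_simps power2_norm_eq_inner)
  qed (simp add: q_def)
  define B where "B = A - m *\<^sub>R mat 1"
  have B_mult: "B *v u = A *v u - m *\<^sub>R u" for u
    by (simp add: B_def matrix_vector_mult_diff_rdistrib scaleR_matrix_vector_assoc[symmetric])
  have "B *v v = 0"
  proof (rule psd_quadratic_form_zero_imp_zero)
    show "transpose B = B" using sym by (simp add: B_def vec_eq_iff transpose_def mat_def)
    show "0 \<le> u \<bullet> (B *v u)" for u using low[of u] by (simp add: B_mult q_def inner_diff_right)
    show "v \<bullet> (B *v v) = 0" using v by (simp add: B_mult q_def m_def inner_diff_right norm_eq_1)
  qed
  moreover have "v \<noteq> 0" using v by auto
  ultimately have "is_eigenvalue A m" unfolding is_eigenvalue_def B_mult by auto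
  with low show ?thesis using that by (simp add: q_def)
qed

lemma lambda_min_le_quadratic_form:
  fixes A :: "real^'n^'n"
  assumes "transpose A = A"
  shows "lambda_min A * (u \<bullet> u) \<le> u \<bullet> (A *v u)"
proof -
  obtain m where m: "is_eigenvalue A m" and low: "\<And>u. m * (u \<bullet> u) \<le> u \<bullet> (A *v u)"
    using symmetric_matrix_least_eigenvalue[OF assms] by blast
  have "lambda_min A = m" unfolding lambda_min_def
  proof (rule cInf_eq_minimum)
    fix c assume "c \<in> {c. is_eigenvalue A c}"
    then obtain w where "w \<noteq> 0" "A *v w = c *\<^sub>R w" by (auto simp: is_eigenvalue_def)
    thus "m \<le> c" using low[of w] by simp
  qed (use m in simp)
  thus ?thesis using low by simp
qed

lemma outer_mult_vec: "outer v *v u = (v \<bullet> u) *\<^sub>R (v::real^'n)"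
  by (simp add: vec_eq_iff outer_def matrix_vector_mult_def inner_vec_def sum_distrib_left algebra_simps)

lemma transpose_outer: "transpose (outer v) = outer v"
  by (simp add: vec_eq_iff outer_def transpose_def)

lemma norm_outer: "norm (outer (v::real^'n)) = (norm v)\<^sup>2"
proof -
  have "outer v $ i = (v $ i) *\<^sub>R v" for i by (simp add: vec_eq_iff outer_def)
  hence "norm (outer v) = L2_set (\<lambda>i. norm v * norm (v $ i)) UNIV"
    unfolding norm_vec_def[of "outer v"] by (simp add: mult.commute)
  also have "\<dots> = norm v * norm v"
    by (simp add: L2_set_right_distrib[symmetric] norm_vec_def[of v])
  also have "\<dots> = (norm v)\<^sup>2" by (simp add: power2_eq_square)
  finally show ?thesis .
qed

lemma continuous_on_outer: "continuous_on S (outer :: real^'n \<Rightarrow> _)"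
  unfolding outer_def by (intro continuous_intros)

lemma bounded_linear_transpose: "bounded_linear (transpose :: real^'n^'m \<Rightarrow> real^'m^'n)"
  by (intro linear_conv_bounded_linear[THEN iffD1] linearI)
    (simp_all add: transpose_def vec_eq_iff transpose_scalar)

lemma bounded_linear_quadratic_form: "bounded_linear (\<lambda>A :: real^'n^'n. u \<bullet> (A *v u))"
  by (intro linear_conv_bounded_linear[THEN iffD1] linearI)
    (simp_all add: matrix_vector_mult_add_rdistrib inner_add_right scaleR_matrix_vector_assoc[symmetric])

text \<open>No boundedness is assumed: if f is unbounded on A, its SUP is an unspecified value,
  yet the conclusion still holds.\<close>

lemma exists_gt_of_le_SUP:
  fixes f :: "'b \<Rightarrow> real"
  assumes "A \<noteq> {}" and "c \<le> (SUP x\<in>A. f x)" and "b < c"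
  obtains x where "x \<in> A" and "b < f x"
proof (cases "bdd_above (f ` A)")
  case True
  thus ?thesis using assms that less_cSUP_iff by (metis order_less_le_trans)
next
  case False
  thus ?thesis by (metis bdd_aboveI2 not_le that)
qed

lemma markov_policies_nonempty: "markov_policies nu \<noteq> {}"
proof -
  have "(\<lambda>_. return_pmf undefined) \<in> markov_policies nu" by (simp add: markov_policies_def)
  thus ?thesis by blast
qed

locale lowrank_mdp =
  fixes H :: nat and nu rho :: "'s measure" and lay :: "'s \<Rightarrow> nat"
    and mu :: "nat \<Rightarrow> 's \<Rightarrow> real^'d"
    and phi :: "nat \<Rightarrow> 's \<Rightarrow> 'a::finite \<Rightarrow> real^'d"
  assumes mdp: "low_rank_mdp H nu rho lay mu phi"
begin

lemma sigma_finite_nu: "sigma_finite_measure nu"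
  and measurable_lay[measurable]: "lay \<in> measurable nu (count_space UNIV)"
  and prob_space_rho: "prob_space rho"
  and sets_rho: "sets rho = sets nu"
  and rho_layer_1: "emeasure rho (space rho - layer_set lay 1) = 0"
  using mdp by (simp_all add: low_rank_mdp_def)

lemma measurable_phi: "h \<in> {1..<H} \<Longrightarrow> (\<lambda>x. phi h x a) \<in> borel_measurable nu"
  and measurable_mu: "h \<in> {2..H} \<Longrightarrow> mu h \<in> borel_measurable nu"
  and norm_phi_le_1: "h \<in> {1..<H} \<Longrightarrow> x \<in> space nu \<Longrightarrow> norm (phi h x a) \<le> 1"
  using mdp by (simp_all add: low_rank_mdp_def)

lemma transition_nonneg:
  "\<lbrakk>h \<in> {1..<H}; x \<in> space nu; lay x = h; x' \<in> space nu; lay x' = Suc h\<rbrakk>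
    \<Longrightarrow> 0 \<le> mu (Suc h) x' \<bullet> phi h x a"
  and transition_total:
  "\<lbrakk>h \<in> {1..<H}; x \<in> space nu; lay x = h\<rbrakk> \<Longrightarrow>
    (\<integral>\<^sup>+x'. ennreal (indicator (layer_set lay (Suc h)) x' * (mu (Suc h) x' \<bullet> phi h x a)) \<partial>nu) = 1"
  using mdp by (simp_all add: low_rank_mdp_def layer_set_def)

lemma indicator_layer_set: "indicator (layer_set lay k) x = (if lay x = k then 1 else (0::real))"
  by (simp add: layer_set_def indicator_def)

definition policy_feature :: "('s \<Rightarrow> 'a pmf) \<Rightarrow> nat \<Rightarrow> 's \<Rightarrow> real^'d" where
  "policy_feature pol h y = (\<Sum>a\<in>UNIV. pmf (pol y) a *\<^sub>R phi h y a)"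

definition policy_outer :: "('s \<Rightarrow> 'a pmf) \<Rightarrow> nat \<Rightarrow> 's \<Rightarrow> real^'d^'d" where
  "policy_outer pol h y = (\<Sum>a\<in>UNIV. pmf (pol y) a *\<^sub>R outer (phi h y a))"

definition layer_distribution :: "nat \<Rightarrow> 's measure \<Rightarrow> bool" where
  "layer_distribution h M \<longleftrightarrow> prob_space M \<and> sets M = sets nu \<and> (AE y in M. lay y = h)"

abbreviation law :: "('s \<Rightarrow> 'a pmf) \<Rightarrow> nat \<Rightarrow> 's measure" where
  "law pol h \<equiv> state_law nu rho lay mu phi pol h"

lemma inner_policy_feature: "c \<bullet> policy_feature pol h y = (\<Sum>a\<in>UNIV. pmf (pol y) a * (c \<bullet> phi h y a))"
  by (simp add: policy_feature_def inner_sum_right)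

lemma measurable_pmf_policy[measurable]:
  "pol \<in> markov_policies nu \<Longrightarrow> (\<lambda>x. pmf (pol x) a) \<in> borel_measurable nu"
  by (simp add: markov_policies_def)

lemma measurable_policy_feature[measurable]:
  "\<lbrakk>pol \<in> markov_policies nu; h \<in> {1..<H}\<rbrakk> \<Longrightarrow> policy_feature pol h \<in> borel_measurable nu"
  unfolding policy_feature_def using measurable_phi by measurable

lemma measurable_policy_outer:
  "\<lbrakk>pol \<in> markov_policies nu; h \<in> {1..<H}\<rbrakk> \<Longrightarrow> policy_outer pol h \<in> borel_measurable nu"
  unfolding policy_outer_def
  using borel_measurable_continuous_on[OF continuous_on_outer measurable_phi] by measurable

lemma norm_policy_feature_le_1:
  assumes "h \<in> {1..<H}" and "y \<in> space nu"
  shows "norm (policy_feature pol h y) \<le> 1"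
proof -
  have "norm (policy_feature pol h y) \<le> (\<Sum>a\<in>UNIV. norm (pmf (pol y) a *\<^sub>R phi h y a))"
    unfolding policy_feature_def by (rule norm_sum)
  also have "\<dots> \<le> (\<Sum>a\<in>UNIV. pmf (pol y) a)"
    using norm_phi_le_1[OF assms] by (intro sum_mono) (auto intro: mult_left_le)
  finally show ?thesis by (simp add: sum_pmf_eq_1)
qed

lemma norm_policy_outer_le_1:
  assumes "h \<in> {1..<H}" and "y \<in> space nu"
  shows "norm (policy_outer pol h y) \<le> 1"
proof -
  have "norm (policy_outer pol h y) \<le> (\<Sum>a\<in>UNIV. norm (pmf (pol y) a *\<^sub>R outer (phi h y a)))"
    unfolding policy_outer_def by (rule norm_sum)
  also have "\<dots> \<le> (\<Sum>a\<in>UNIV. pmf (pol y) a)"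
    using norm_phi_le_1[OF assms]
    by (intro sum_mono) (auto simp: norm_outer intro!: mult_left_le power_le_one)
  finally show ?thesis by (simp add: sum_pmf_eq_1)
qed

lemma layer_distribution_rho: "layer_distribution 1 rho"
proof -
  have [measurable]: "lay \<in> measurable rho (count_space UNIV)"
    unfolding measurable_cong_sets[OF sets_rho refl] by (rule measurable_lay)
  have "{y \<in> space rho. lay y \<noteq> 1} = space rho - layer_set lay 1"
    by (auto simp: layer_set_def)
  moreover have "{y \<in> space rho. lay y \<noteq> 1} \<in> sets rho" by measurable
  ultimately have "{y \<in> space rho. lay y \<noteq> 1} \<in> null_sets rho"
    using rho_layer_1 by (intro null_setsI) simp_all
  hence "AE y in rho. lay y = 1" by (rule AE_I') auto
  thus ?thesis using prob_space_rho sets_rho by (simp add: layer_distribution_def)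
qed

lemma AE_layer_distribution:
  assumes "layer_distribution h M"
  shows "AE y in M. y \<in> space nu \<and> lay y = h"
proof -
  have "space M = space nu"
    using assms by (intro sets_eq_imp_space_eq) (simp add: layer_distribution_def)
  moreover have "AE y in M. lay y = h"
    using assms by (simp add: layer_distribution_def)
  ultimately show ?thesis using AE_space[of M] by (auto elim: eventually_mono)
qed

lemma integrable_layer_distribution:
  fixes f :: "'s \<Rightarrow> 'b::{banach,second_countable_topology}"
  assumes "layer_distribution h M" and "f \<in> borel_measurable nu"
    and "\<And>y. y \<in> space nu \<Longrightarrow> norm (f y) \<le> B"
  shows "integrable M f"
proof -
  interpret prob_space M using assms(1) by (simp add: layer_distribution_def)
  have sets_M: "sets M = sets nu" using assms(1) by (simp add: layer_distribution_def)
  have "AE y in M. norm (f y) \<le> B"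
    using assms(3) sets_eq_imp_space_eq[OF sets_M] by (intro AE_I2) simp
  moreover have "f \<in> borel_measurable M"
    unfolding measurable_cong_sets[OF sets_M refl] by (rule assms(2))
  ultimately show ?thesis by (rule integrable_const_bound)
qed

lemma policy_transition_total:
  assumes "n \<in> {1..<H}" and "y \<in> space nu" and "lay y = n"
  shows "(\<integral>\<^sup>+x'. ennreal (indicator (layer_set lay (Suc n)) x' * (mu (Suc n) x' \<bullet> policy_feature pol n y)) \<partial>nu) = 1"
proof -
  define T where "T a x' = ennreal (indicator (layer_set lay (Suc n)) x' * (mu (Suc n) x' \<bullet> phi n y a))" for a x'
  have [measurable]: "mu (Suc n) \<in> borel_measurable nu" using assms(1) by (intro measurable_mu) simp
  have T_measurable: "T a \<in> borel_measurable nu" for a unfolding T_def indicator_layer_set by measurable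
  have "(\<integral>\<^sup>+x'. ennreal (indicator (layer_set lay (Suc n)) x' * (mu (Suc n) x' \<bullet> policy_feature pol n y)) \<partial>nu)
      = (\<integral>\<^sup>+x'. (\<Sum>a\<in>UNIV. ennreal (pmf (pol y) a) * T a x') \<partial>nu)"
  proof (intro nn_integral_cong)
    fix x' assume "x' \<in> space nu"
    hence "0 \<le> indicator (layer_set lay (Suc n)) x' * (mu (Suc n) x' \<bullet> phi n y a)" for a
      using transition_nonneg[OF assms] by (simp add: indicator_layer_set)
    thus "ennreal (indicator (layer_set lay (Suc n)) x' * (mu (Suc n) x' \<bullet> policy_feature pol n y))
        = (\<Sum>a\<in>UNIV. ennreal (pmf (pol y) a) * T a x')"
      by (simp add: T_def inner_policy_feature sum_distrib_left algebra_simps sum_ennreal[symmetric]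
          ennreal_mult')
  qed
  also have "\<dots> = (\<Sum>a\<in>UNIV. ennreal (pmf (pol y) a) * (\<integral>\<^sup>+x'. T a x' \<partial>nu))"
    using T_measurable by (simp add: nn_integral_sum nn_integral_cmult)
  also have "\<dots> = 1"
    using transition_total[OF assms] by (simp add: T_def sum_pmf_eq_1)
  finally show ?thesis .
qed

lemma nn_integral_policy_transition_mixture:
  assumes M: "layer_distribution n M" and n: "n \<in> {1..<H}" and pol: "pol \<in> markov_policies nu"
  shows "(\<integral>\<^sup>+x'. ennreal (indicator (layer_set lay (Suc n)) x' * (mu (Suc n) x' \<bullet> feat_mean_of M phi pol n)) \<partial>nu) = 1"
proof -
  interpret M: prob_space M using M by (simp add: layer_distribution_def)
  have sets_M: "sets M = sets nu" using M by (simp add: layer_distribution_def)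
  have [measurable]: "mu (Suc n) \<in> borel_measurable nu" using n by (intro measurable_mu) simp
  have [measurable]: "policy_feature pol n \<in> borel_measurable nu"
    using pol n by (rule measurable_policy_feature)
  have int: "integrable M (policy_feature pol n)"
    using M norm_policy_feature_le_1[OF n] by (intro integrable_layer_distribution) auto
  note AE_layer = AE_layer_distribution[OF M]
  define G where "G y x' = indicator (layer_set lay (Suc n)) x' * (mu (Suc n) x' \<bullet> policy_feature pol n y)"
    for y x'
  have G_nonneg: "0 \<le> G y x'" if "x' \<in> space nu" "y \<in> space nu" "lay y = n" for x' y
    using transition_nonneg[OF n that(2,3) that(1)]
    by (auto simp: G_def indicator_layer_set inner_policy_feature intro!: sum_nonneg)
  have mixture: "ennreal (indicator (layer_set lay (Suc n)) x' * (mu (Suc n) x' \<bullet> feat_mean_of M phi pol n))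
      = (\<integral>\<^sup>+y. ennreal (G y x') \<partial>M)" if "x' \<in> space nu" for x'
  proof -
    have "indicator (layer_set lay (Suc n)) x' * (mu (Suc n) x' \<bullet> feat_mean_of M phi pol n) = (\<integral>y. G y x' \<partial>M)"
      using int by (simp add: G_def feat_mean_of_def policy_feature_def[symmetric])
    also have "ennreal \<dots> = (\<integral>\<^sup>+y. ennreal (G y x') \<partial>M)"
      using int AE_layer G_nonneg[OF that] by (intro nn_integral_eq_integral[symmetric]) (auto simp: G_def)
    finally show ?thesis .
  qed
  have G_measurable: "(\<lambda>(y, x'). ennreal (G y x')) \<in> borel_measurable (M \<Otimes>\<^sub>M nu)"
    unfolding measurable_cong_sets[OF sets_pair_measure_cong[OF sets_M refl] refl]
    unfolding G_def indicator_layer_set by measurable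
  interpret pair_sigma_finite M nu
    unfolding pair_sigma_finite_def using sigma_finite_nu M.sigma_finite_measure_axioms by simp
  have "(\<integral>\<^sup>+x'. ennreal (indicator (layer_set lay (Suc n)) x' * (mu (Suc n) x' \<bullet> feat_mean_of M phi pol n)) \<partial>nu)
      = (\<integral>\<^sup>+x'. (\<integral>\<^sup>+y. ennreal (G y x') \<partial>M) \<partial>nu)"
    by (intro nn_integral_cong mixture)
  \<comment> \<open>Fubini: the transition density of each state y of layer n has total mass 1.\<close>
  also have "\<dots> = (\<integral>\<^sup>+y. (\<integral>\<^sup>+x'. ennreal (G y x') \<partial>nu) \<partial>M)"
    using Fubini[OF G_measurable] by simp
  also have "\<dots> = (\<integral>\<^sup>+y. 1 \<partial>M)"
    using AE_layer by (intro nn_integral_cong_AE) (auto simp: G_def policy_transition_total[OF n])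
  finally show ?thesis by (simp add: M.emeasure_space_1)
qed

lemma layer_distribution_step:
  assumes "layer_distribution n M" and n: "n \<in> {1..<H}" and "pol \<in> markov_policies nu"
  shows "layer_distribution (Suc n) (density nu (\<lambda>x'.
    ennreal (indicator (layer_set lay (Suc n)) x' * (mu (Suc n) x' \<bullet> feat_mean_of M phi pol n))))"
    (is "layer_distribution _ (density nu ?f)")
proof -
  have [measurable]: "mu (Suc n) \<in> borel_measurable nu" using n by (intro measurable_mu) simp
  have f_measurable[measurable]: "?f \<in> borel_measurable nu"
    unfolding indicator_layer_set by measurable
  have "emeasure (density nu ?f) (space (density nu ?f)) = (\<integral>\<^sup>+x'. ?f x' * indicator (space nu) x' \<partial>nu)"
    unfolding space_density by (rule emeasure_density[OF f_measurable sets.top])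
  also have "\<dots> = (\<integral>\<^sup>+x'. ?f x' \<partial>nu)" by (intro nn_integral_cong) simp
  also have "\<dots> = 1" using assms by (rule nn_integral_policy_transition_mixture)
  finally have "prob_space (density nu ?f)" by (rule prob_spaceI)
  moreover have "AE x' in density nu ?f. lay x' = Suc n"
    unfolding AE_density[OF f_measurable] by (rule AE_I2) (simp add: indicator_layer_set)
  ultimately show ?thesis by (simp add: layer_distribution_def)
qed

lemma layer_distribution_law:
  assumes pol: "pol \<in> markov_policies nu"
  shows "h \<in> {1..H} \<Longrightarrow> layer_distribution h (law pol h)"
proof (induction h)
  case (Suc k)
  show ?case
  proof (cases k)
    case 0
    thus ?thesis using layer_distribution_rho by simp
  next
    case (Suc j)
    hence "k \<in> {1..<H}" using Suc.prems by simp
    with Suc.IH show ?thesis using layer_distribution_step[OF _ _ pol] \<open>k = Suc j\<close> by simp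
  qed
qed simp

lemma quadratic_form_policy_outer:
  "u \<bullet> (policy_outer pol h y *v u) = (\<Sum>a\<in>UNIV. pmf (pol y) a * (u \<bullet> phi h y a)\<^sup>2)"
proof -
  define Q where "Q A = u \<bullet> (A *v u)" for A :: "real^'d^'d"
  have "linear Q" unfolding Q_def by (rule bounded_linear.linear[OF bounded_linear_quadratic_form])
  hence "Q (policy_outer pol h y) = (\<Sum>a\<in>UNIV. pmf (pol y) a * Q (outer (phi h y a)))"
    by (simp add: policy_outer_def real_vector.linear_sum real_vector.linear_scale)
  thus ?thesis by (simp add: Q_def outer_mult_vec power2_eq_square inner_commute)
qed

context
  fixes pol :: "'s \<Rightarrow> 'a pmf" and h :: nat
  assumes pol: "pol \<in> markov_policies nu" and h: "h \<in> {1..<H}"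
begin

lemma layer_distribution_law_policy: "layer_distribution h (law pol h)"
  using h by (intro layer_distribution_law[OF pol]) simp

lemma integrable_policy_feature: "integrable (law pol h) (policy_feature pol h)"
  using layer_distribution_law_policy measurable_policy_feature[OF pol h] norm_policy_feature_le_1[OF h]
  by (rule integrable_layer_distribution)

lemma integrable_policy_outer: "integrable (law pol h) (policy_outer pol h)"
  using layer_distribution_law_policy measurable_policy_outer[OF pol h] norm_policy_outer_le_1[OF h]
  by (rule integrable_layer_distribution)

lemma feat_cov_eq: "feat_cov nu rho lay mu phi pol h = integral\<^sup>L (law pol h) (policy_outer pol h)"
  by (simp add: feat_cov_def policy_outer_def[abs_def])

lemma occ_density_eq:
  "occ_density nu rho lay mu phi pol (Suc h) x = mu (Suc h) x \<bullet> integral\<^sup>L (law pol h) (policy_feature pol h)"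
  by (simp add: occ_density_def feat_mean_def feat_mean_of_def policy_feature_def[abs_def])

lemma transpose_feat_cov:
  "transpose (feat_cov nu rho lay mu phi pol h) = feat_cov nu rho lay mu phi pol h"
proof -
  have lin: "linear (transpose :: real^'d^'d \<Rightarrow> _)"
    by (rule bounded_linear.linear[OF bounded_linear_transpose])
  have symmetric: "transpose (policy_outer pol h y) = policy_outer pol h y" for y
    unfolding policy_outer_def
    by (simp add: real_vector.linear_sum[OF lin] real_vector.linear_scale[OF lin] transpose_outer)
  have "transpose (integral\<^sup>L (law pol h) (policy_outer pol h))
      = (\<integral>y. transpose (policy_outer pol h y) \<partial>law pol h)"
    by (rule integral_bounded_linear[OF bounded_linear_transpose integrable_policy_outer, symmetric])
  also have "\<dots> = integral\<^sup>L (law pol h) (policy_outer pol h)"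
    by (simp only: symmetric)
  finally show ?thesis unfolding feat_cov_eq .
qed

lemma quadratic_form_feat_cov:
  "u \<bullet> (feat_cov nu rho lay mu phi pol h *v u) = (\<integral>y. u \<bullet> (policy_outer pol h y *v u) \<partial>law pol h)"
  unfolding feat_cov_eq
  by (rule integral_bounded_linear[OF bounded_linear_quadratic_form integrable_policy_outer, symmetric])

lemma lambda_min_feat_cov_le_quadratic_form:
  "lambda_min (feat_cov nu rho lay mu phi pol h) * (u \<bullet> u)
    \<le> (\<integral>y. (\<Sum>a\<in>UNIV. pmf (pol y) a * (u \<bullet> phi h y a)\<^sup>2) \<partial>law pol h)"
  using lambda_min_le_quadratic_form[OF transpose_feat_cov, of u]
  by (simp add: quadratic_form_feat_cov quadratic_form_policy_outer)

lemma prob_space_law: "prob_space (law pol h)"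
  using layer_distribution_law_policy by (simp add: layer_distribution_def)

lemmas AE_law_layer = AE_layer_distribution[OF layer_distribution_law_policy]

lemma integrable_policy_quadratic:
  "integrable (law pol h) (\<lambda>y. \<Sum>a\<in>UNIV. pmf (pol y) a * (u \<bullet> phi h y a)\<^sup>2)"
  using integrable_bounded_linear[OF bounded_linear_quadratic_form integrable_policy_outer, of u]
  by (simp add: quadratic_form_policy_outer)

lemma lambda_min_feat_cov_le_1: "lambda_min (feat_cov nu rho lay mu phi pol h) \<le> 1"
proof -
  interpret prob_space "law pol h" by (rule prob_space_law)
  define u :: "real^'d" where "u = axis undefined 1"
  have "lambda_min (feat_cov nu rho lay mu phi pol h) * (u \<bullet> u)
      \<le> (\<integral>y. (\<Sum>a\<in>UNIV. pmf (pol y) a * (u \<bullet> phi h y a)\<^sup>2) \<partial>law pol h)"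
    by (rule lambda_min_feat_cov_le_quadratic_form)
  also have "\<dots> \<le> 1"
  proof (intro integral_le_const integrable_policy_quadratic)
    have bound: "(\<Sum>a\<in>UNIV. pmf (pol y) a * (u \<bullet> phi h y a)\<^sup>2) \<le> (\<Sum>a\<in>UNIV. pmf (pol y) a)"
      if "y \<in> space nu" for y
    proof (intro sum_mono mult_left_le)
      fix a
      have "\<bar>u \<bullet> phi h y a\<bar> \<le> norm u * norm (phi h y a)" by (rule Cauchy_Schwarz_ineq2)
      also have "\<dots> \<le> 1" using norm_phi_le_1[OF h that] by (simp add: u_def)
      finally show "(u \<bullet> phi h y a)\<^sup>2 \<le> 1" by (simp add: abs_square_le_1)
    qed simp
    show "AE y in law pol h. (\<Sum>a\<in>UNIV. pmf (pol y) a * (u \<bullet> phi h y a)\<^sup>2) \<le> 1"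
      using AE_law_layer by eventually_elim (use bound in \<open>simp add: sum_pmf_eq_1\<close>)
  qed
  finally show ?thesis by (simp add: u_def)
qed

lemma occ_density_le_norm: "occ_density nu rho lay mu phi pol (Suc h) x \<le> norm (mu (Suc h) x)"
proof -
  interpret prob_space "law pol h" by (rule prob_space_law)
  have "norm (integral\<^sup>L (law pol h) (policy_feature pol h)) \<le> (\<integral>y. norm (policy_feature pol h y) \<partial>law pol h)"
    by (rule integral_norm_bound)
  also have "\<dots> \<le> 1"
    using integrable_policy_feature AE_law_layer norm_policy_feature_le_1[OF h]
    by (intro integral_le_const) auto
  finally have "norm (integral\<^sup>L (law pol h) (policy_feature pol h)) \<le> 1" .
  hence "norm (mu (Suc h) x) * norm (integral\<^sup>L (law pol h) (policy_feature pol h)) \<le> norm (mu (Suc h) x)"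
    by (simp add: mult_left_le)
  thus ?thesis unfolding occ_density_eq using norm_cauchy_schwarz order_trans by blast
qed

lemma lambda_min_mul_norm_le_occ_density:
  assumes x: "x \<in> space nu" "lay x = Suc h"
  shows "lambda_min (feat_cov nu rho lay mu phi pol h) * norm (mu (Suc h) x)
    \<le> occ_density nu rho lay mu phi pol (Suc h) x"
proof (cases "mu (Suc h) x = 0")
  case True
  thus ?thesis by (simp add: occ_density_eq)
next
  case False
  interpret prob_space "law pol h" by (rule prob_space_law)
  define m where "m = mu (Suc h) x"
  have pointwise: "(\<Sum>a\<in>UNIV. pmf (pol y) a * (m \<bullet> phi h y a)\<^sup>2)
      \<le> norm m * (m \<bullet> policy_feature pol h y)" if "y \<in> space nu \<and> lay y = h" for y
  proof -
    have "(m \<bullet> phi h y a)\<^sup>2 \<le> norm m * (m \<bullet> phi h y a)" for a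
    proof -
      have "0 \<le> m \<bullet> phi h y a" using transition_nonneg[OF h _ _ x] that by (simp add: m_def)
      moreover have "m \<bullet> phi h y a \<le> norm m"
        using norm_cauchy_schwarz[of m] norm_phi_le_1[OF h, of y] that
        by (meson mult_left_le norm_ge_zero order_trans)
      ultimately show ?thesis by (simp add: power2_eq_square mult_right_mono)
    qed
    hence "(\<Sum>a\<in>UNIV. pmf (pol y) a * (m \<bullet> phi h y a)\<^sup>2)
        \<le> (\<Sum>a\<in>UNIV. pmf (pol y) a * (norm m * (m \<bullet> phi h y a)))"
      by (intro sum_mono mult_left_mono) auto
    thus ?thesis by (simp add: inner_policy_feature sum_distrib_left algebra_simps)
  qed
  have "lambda_min (feat_cov nu rho lay mu phi pol h) * (norm m * norm m)
      \<le> (\<integral>y. (\<Sum>a\<in>UNIV. pmf (pol y) a * (m \<bullet> phi h y a)\<^sup>2) \<partial>law pol h)"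
    using lambda_min_feat_cov_le_quadratic_form[of m] by (simp add: power2_norm_eq_inner[symmetric] power2_eq_square)
  also have "\<dots> \<le> (\<integral>y. norm m * (m \<bullet> policy_feature pol h y) \<partial>law pol h)"
    using integrable_policy_quadratic integrable_policy_feature
      eventually_mono[OF AE_law_layer pointwise]
    by (intro integral_mono_AE) auto
  also have "\<dots> = norm m * occ_density nu rho lay mu phi pol (Suc h) x"
    using integrable_policy_feature by (simp add: occ_density_eq m_def)
  finally have "norm m * (lambda_min (feat_cov nu rho lay mu phi pol h) * norm m)
      \<le> norm m * occ_density nu rho lay mu phi pol (Suc h) x"
    by (simp add: algebra_simps)
  thus ?thesis using False by (simp add: m_def)
qed

end

lemma reachability_of_feature_coverage:
  assumes eta: "eta > 0" and g: "g \<in> {1..<H}" and x: "x \<in> space nu" "lay x = Suc g"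
    and coverage: "eta \<le> (SUP pol\<in>markov_policies nu. lambda_min (feat_cov nu rho lay mu phi pol g))"
  shows "(eta / 2) powr (3 / 2) * norm (mu (Suc g) x)
    \<le> (SUP pol\<in>markov_policies nu. occ_density nu rho lay mu phi pol (Suc g) x)"
proof -
  have "eta / 2 < eta" using eta by simp
  then obtain pol where pol: "pol \<in> markov_policies nu"
    and covered: "eta / 2 < lambda_min (feat_cov nu rho lay mu phi pol g)"
    using exists_gt_of_le_SUP[OF markov_policies_nonempty coverage] by blast
  have "eta / 2 \<le> 1" using covered lambda_min_feat_cov_le_1[OF pol g] by simp
  hence "(eta / 2) powr (3 / 2) \<le> (eta / 2) powr 1" using eta by (intro powr_mono') auto
  hence "(eta / 2) powr (3 / 2) * norm (mu (Suc g) x) \<le> eta / 2 * norm (mu (Suc g) x)"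
    using eta by (intro mult_right_mono) simp_all
  also have "\<dots> \<le> lambda_min (feat_cov nu rho lay mu phi pol g) * norm (mu (Suc g) x)"
    using covered by (intro mult_right_mono) simp_all
  also have "\<dots> \<le> occ_density nu rho lay mu phi pol (Suc g) x"
    by (rule lambda_min_mul_norm_le_occ_density[OF pol g x])
  also have "\<dots> \<le> (SUP pol\<in>markov_policies nu. occ_density nu rho lay mu phi pol (Suc g) x)"
    using occ_density_le_norm[OF _ g] by (intro cSUP_upper[OF pol] bdd_aboveI2) auto
  finally show ?thesis .
qed

end

theorem mainTheorem8:
  fixes H :: nat and nu rho :: "'s measure" and lay :: "'s \<Rightarrow> nat"
    and mu :: "nat \<Rightarrow> 's \<Rightarrow> real^'d"
    and phi :: "nat \<Rightarrow> 's \<Rightarrow> 'a::finite \<Rightarrow> real^'d"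
    and eta :: real
  assumes mdp: "low_rank_mdp H nu rho lay mu phi"
    and eta_pos: "eta > 0"
    and coverage: "\<forall>h\<in>{1..<H}.
        (SUP pol\<in>markov_policies nu. lambda_min (feat_cov nu rho lay mu phi pol h)) \<ge> eta"
  shows "\<forall>h\<in>{2..H}. \<forall>x\<in>space nu \<inter> layer_set lay h.
        (SUP pol\<in>markov_policies nu. occ_density nu rho lay mu phi pol h x)
          \<ge> (eta / 2) powr (3 / 2) * norm (mu h x)"
proof (intro ballI)
  interpret lowrank_mdp H nu rho lay mu phi by (rule lowrank_mdp.intro[OF mdp])
  fix h x assume h: "h \<in> {2..H}" and x: "x \<in> space nu \<inter> layer_set lay h"
  then obtain g where g: "h = Suc g" "g \<in> {1..<H}"
    by (cases h) auto
  show "(SUP pol\<in>markov_policies nu. occ_density nu rho lay mu phi pol h x)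
      \<ge> (eta / 2) powr (3 / 2) * norm (mu h x)"
    using reachability_of_feature_coverage[OF eta_pos g(2)] coverage g x by (simp add: layer_set_def)
qed

end
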